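(* For every $\nu\in\mathbb{C}$, there is no $E_0\in\mathbb{C}$ and no $M\in\mathbb{C}(z,E)$, regular at $E=E_0$, such that $$H(z,E):=M^2z^2+Mz-M'z^2-z^4+z^2E-4\nu^2+1=O((E-E_0)^3)\quad (E\to E_0).$$ Equivalently, in the factorization $H=w(E)P(z)/Q(z,E)$ with polynomials $w,P,Q$, the polynomial $w$ has no root of multiplicity $\ge 3$.
   Context: $'$ denotes $\partial/\partial z$. $H$ is the expression under the square root in the eigenfunction form $\psi=z^{3/2}\left(\frac{M}{2z}\mathcal{W}(E/4,\nu,z^2)+\mathcal{W}'(E/4,\nu,z^2)\right)/\sqrt{H}$, where $\mathcal W(\mu,\nu,z)$ solves $y''+\left(-\frac14+\frac{\mu}{z}+\frac{1/4-\nu^2}{z^2}\right)y=0$. *)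

theory Defs
  imports "HOL-Computational_Algebra.Polynomial"
begin

(* Bivariate polynomials in C[z,E] are represented as nested polynomials:
   the OUTER variable is E, the coefficients are polynomials in z.
   An element of C(z,E) is a quotient A/B of two such polynomials. *)
type_synonym bipoly = "complex poly poly"

definition Zvar :: bipoly where "Zvar = [: [:0, 1:] :]"
definition Evar :: bipoly where "Evar = [:0, 1:]"
definition bconst :: "complex \<Rightarrow> bipoly" where "bconst c = [: [:c:] :]"

definition dz :: "bipoly \<Rightarrow> bipoly" where "dz p = map_poly pderiv p"

definition at_E :: "bipoly \<Rightarrow> complex \<Rightarrow> complex poly" where
  "at_E p E0 = poly p [:E0:]"

(* The rational function A/B is regular at E = E0 (denominator does not vanish
   identically on E = E0). *)
definition regular_at_E :: "bipoly \<Rightarrow> complex \<Rightarrow> bool" where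
  "regular_at_E B E0 \<longleftrightarrow> at_E B E0 \<noteq> 0"

(* For M = A/B, with M' = (dz A * B - A * dz B)/B^2, one has
   H * B^2 = Hnum nu A B where
   H = M^2 z^2 + M z - M' z^2 - z^4 + z^2 E - 4 nu^2 + 1. *)
definition Hnum :: "complex \<Rightarrow> bipoly \<Rightarrow> bipoly \<Rightarrow> bipoly" where
  "Hnum \<nu> A B =
     A^2 * Zvar^2 + A * B * Zvar - (dz A * B - A * dz B) * Zvar^2
     + (- (Zvar^4) + Zvar^2 * Evar - bconst (4 * \<nu>^2) + 1) * B^2"

(* H = O((E-E0)^3) as E -> E0 in C(z,E): the rational function H/(E-E0)^3
   equals some C/D with D regular at E0, i.e. (cross-multiplying, since
   H = Hnum/B^2)  Hnum * D = (E-E0)^3 * C * B^2. *)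
definition H_bigO3 :: "complex \<Rightarrow> bipoly \<Rightarrow> bipoly \<Rightarrow> complex \<Rightarrow> bool" where
  "H_bigO3 \<nu> A B E0 \<longleftrightarrow>
     (\<exists>C D. regular_at_E D E0 \<and>
        Hnum \<nu> A B * D = (Evar - bconst E0)^3 * C * B^2)"

end

theory Submission
  imports Defs "HOL-Computational_Algebra.Computational_Algebra"
begin

text \<open>Write \<open>M = A/B\<close> and expand in \<open>\<epsilon> = E - E0\<close>: \<open>M = m0 + m1 \<epsilon> + m2 \<epsilon>\<^sup>2 + \<dots>\<close> with
  \<open>m\<^sub>i \<in> \<complex>(z)\<close>. The vanishing of the coefficients of \<open>1, \<epsilon>, \<epsilon>\<^sup>2\<close> in \<open>H\<close> is the Riccati equation
  \<open>m0\<^sup>2 = m0' - m0/z + z\<^sup>2 - E0 + (4\<nu>\<^sup>2 - 1)/z\<^sup>2\<close> together with \<open>m1' = P m1 + 1\<close> and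
  \<open>m2' = P m2 + m1\<^sup>2\<close>, where \<open>P = 2 m0 + 1/z\<close>.

  At a finite point the Riccati equation allows \<open>m0\<close> at most a simple pole. If \<open>m1\<close> had a
  nonzero residue, its order \<open>e < 0\<close> would equal \<open>res P\<close>, which forces \<open>m2\<close> to vanish to order
  \<open>> 2e\<close>; then \<open>(m2/m1)' = m1 - m2/m1\<^sup>2\<close> exhibits \<open>m1\<close> as a derivative plus a function without
  residue, a contradiction. So \<open>m1\<close> has no residues in the finite plane. At infinity, however,
  the Riccati equation forces \<open>m0 \<sim> \<plusminus>z\<close>, and then the equation for \<open>m1\<close> forces a nonzero
  \<open>1/z\<close> term, i.e. a nonzero residue at infinity. This contradicts the residue theorem for the
  rational function \<open>m1\<close>.

  Expansions at \<open>z = a\<close> and at \<open>z = \<infinity>\<close> are modelled by substituting \<open>X + a\<close> and \<open>1/X\<close> for \<open>z\<close>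
  in formal Laurent series.\<close>

unbundle Formal_Laurent_Series.fps_syntax
unbundle Formal_Power_Series.fps_syntax

section \<open>Polynomials evaluated at Laurent series\<close>

locale coeff_ring_hom =
  fixes g :: "'a::comm_ring_1 \<Rightarrow> 'b::comm_ring_1"
  assumes hom_add: "g (x + y) = g x + g y"
    and hom_mult: "g (x * y) = g x * g y"
    and hom_one: "g 1 = 1"
begin

lemma hom_zero: "g 0 = 0"
  using hom_add[of 0 0] by simp

lemma hom_uminus: "g (- x) = - g x"
  using hom_add[of x "- x"] hom_zero by (metis add.right_inverse add.inverse_unique)

lemma map_poly_add: "map_poly g (p + q) = map_poly g p + map_poly g q"
  by (intro poly_eqI) (simp add: coeff_map_poly hom_zero hom_add)

lemma map_poly_uminus: "map_poly g (- p) = - map_poly g p"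
  by (intro poly_eqI) (simp add: coeff_map_poly hom_zero hom_uminus)

lemma map_poly_diff: "map_poly g (p - q) = map_poly g p - map_poly g q"
  using map_poly_add[of p "- q"] by (simp add: map_poly_uminus)

lemma map_poly_mult: "map_poly g (p * q) = map_poly g p * map_poly g q"
proof (induction p)
  case (pCons a p)
  have "pCons a p * q = smult a q + pCons 0 (p * q)"
    by simp
  then show ?case
    using pCons.IH
    by (simp add: map_poly_add map_poly_smult map_poly_pCons hom_zero hom_mult)
qed simp

lemma map_poly_power: "map_poly g (p ^ n) = map_poly g p ^ n"
  by (induction n) (simp_all add: map_poly_mult hom_one)

end

interpretation fls_const: coeff_ring_hom "fls_const :: 'a::comm_ring_1 \<Rightarrow> 'a fls"
  by unfold_locales (simp_all add: fls_plus_const)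

lemma fls_const_diff: "fls_const (a - b) = fls_const a - fls_const (b :: 'a::ab_group_add)"
  by (metis diff_conv_add_uminus fls_plus_const fls_const_uminus)

definition fls_eval :: "'a::comm_ring_1 fls \<Rightarrow> 'a poly \<Rightarrow> 'a fls" where
  "fls_eval Z p = poly (map_poly fls_const p) Z"

lemma fls_eval_simps [simp]:
  "fls_eval Z 0 = 0" "fls_eval Z 1 = 1" "fls_eval Z [:c:] = fls_const c"
  "fls_eval Z (pCons c p) = fls_const c + Z * fls_eval Z p"
  "fls_eval Z (p + q) = fls_eval Z p + fls_eval Z q"
  "fls_eval Z (p - q) = fls_eval Z p - fls_eval Z q"
  "fls_eval Z (- p) = - fls_eval Z p"
  "fls_eval Z (p * q) = fls_eval Z p * fls_eval Z q"
  "fls_eval Z (p ^ n) = fls_eval Z p ^ n"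
  "fls_eval Z (smult c p) = fls_const c * fls_eval Z p"
  by (simp_all add: fls_eval_def map_poly_pCons fls_const.map_poly_add fls_const.map_poly_diff
      fls_const.map_poly_uminus fls_const.map_poly_mult fls_const.map_poly_power map_poly_smult)

definition fls_deriv_wrt :: "'a::field fls \<Rightarrow> 'a fls \<Rightarrow> 'a fls" where
  "fls_deriv_wrt Z f = fls_deriv f / fls_deriv Z"

lemma fls_deriv_wrt_simps [simp]:
  "fls_deriv_wrt Z (f + g) = fls_deriv_wrt Z f + fls_deriv_wrt Z g"
  "fls_deriv_wrt Z (f - g) = fls_deriv_wrt Z f - fls_deriv_wrt Z g"
  "fls_deriv_wrt Z (f * g) = fls_deriv_wrt Z f * g + f * fls_deriv_wrt Z g"
  "fls_deriv_wrt Z (fls_const c) = 0"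
  "fls_deriv_wrt Z 0 = 0" "fls_deriv_wrt Z 1 = 0"
  by (simp_all add: fls_deriv_wrt_def add_divide_distrib diff_divide_distrib)

lemma fls_deriv_wrt_self: "fls_deriv Z \<noteq> 0 \<Longrightarrow> fls_deriv_wrt Z Z = 1"
  by (simp add: fls_deriv_wrt_def)

lemma fls_deriv_wrt_sum: "fls_deriv_wrt Z (sum f S) = (\<Sum>i\<in>S. fls_deriv_wrt Z (f i))"
  by (simp add: fls_deriv_wrt_def fls_deriv_sum sum_divide_distrib)

lemma fls_eval_pderiv:
  assumes "fls_deriv Z \<noteq> 0"
  shows "fls_eval Z (pderiv p) = fls_deriv_wrt Z (fls_eval Z p)"
  by (induction p) (simp_all add: pderiv_pCons fls_deriv_wrt_self[OF assms])

definition z_at :: "'a::comm_ring_1 \<Rightarrow> 'a fls" where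
  "z_at a = fls_X + fls_const a"

lemma fls_deriv_wrt_z_at: "fls_deriv_wrt (z_at a) f = fls_deriv f"
  by (simp add: fls_deriv_wrt_def z_at_def)

lemma fls_deriv_wrt_X_inv:
  "fls_deriv_wrt (fls_X_inv :: 'a::field fls) f = - (fls_X^2 * fls_deriv f)"
proof -
  have "inverse (fls_X_inv^2 :: 'a fls) = fls_X^2"
    by (simp add: power_inverse[symmetric] fls_inverse_X_inv)
  then show ?thesis
    by (simp add: fls_deriv_wrt_def divide_inverse mult.commute)
qed

section \<open>Orders of Laurent series\<close>

definition fls_order_ge :: "'a::zero fls \<Rightarrow> int \<Rightarrow> bool" where
  "fls_order_ge f n \<longleftrightarrow> (\<forall>k<n. f $$ k = 0)"

lemma fls_order_ge_subdegree: "fls_order_ge f (fls_subdegree f)"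
  by (simp add: fls_order_ge_def)

lemma fls_order_ge_mono: "fls_order_ge f n \<Longrightarrow> m \<le> n \<Longrightarrow> fls_order_ge f m"
  by (auto simp: fls_order_ge_def)

lemma fls_order_geD: "fls_order_ge f n \<Longrightarrow> k < n \<Longrightarrow> f $$ k = 0"
  by (auto simp: fls_order_ge_def)

lemma fls_order_ge_Suc: "fls_order_ge f n \<Longrightarrow> f $$ n = 0 \<Longrightarrow> fls_order_ge f (n + 1)"
  unfolding fls_order_ge_def by (metis zless_add1_eq)

lemma fls_order_ge_le_subdegree: "fls_order_ge f n \<Longrightarrow> f \<noteq> 0 \<Longrightarrow> n \<le> fls_subdegree f"
  by (auto simp: fls_order_ge_def intro: fls_subdegree_geI)

lemma fls_order_ge_subdegree_eq:
  "fls_order_ge f n \<Longrightarrow> f $$ n \<noteq> 0 \<Longrightarrow> fls_subdegree f = n"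
  by (auto simp: fls_order_ge_def intro!: fls_subdegree_eqI)

lemma fls_order_ge_simps [simp]:
  "fls_order_ge 0 n"
  "n \<le> 0 \<Longrightarrow> fls_order_ge (fls_const c) n"
  "n \<le> 0 \<Longrightarrow> fls_order_ge 1 n"
  "n \<le> 1 \<Longrightarrow> fls_order_ge fls_X n"
  "n \<le> -1 \<Longrightarrow> fls_order_ge fls_X_inv n"
  by (auto simp: fls_order_ge_def)

lemma fls_order_ge_add: "fls_order_ge f n \<Longrightarrow> fls_order_ge g n \<Longrightarrow> fls_order_ge (f + g) n"
  by (auto simp: fls_order_ge_def)

lemma fls_order_ge_uminus: "fls_order_ge f n \<Longrightarrow> fls_order_ge (- f) n"
  by (auto simp: fls_order_ge_def)

lemma fls_order_ge_diff: "fls_order_ge f n \<Longrightarrow> fls_order_ge g n \<Longrightarrow> fls_order_ge (f - g) n"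
  by (auto simp: fls_order_ge_def)

lemma fls_order_ge_mult:
  fixes f g :: "'a::comm_ring_1 fls"
  assumes f: "fls_order_ge f n" and g: "fls_order_ge g m"
  shows "fls_order_ge (f * g) (n + m)"
proof (cases "f = 0 \<or> g = 0")
  case False
  then have "n \<le> fls_subdegree f" "m \<le> fls_subdegree g"
    using f g fls_order_ge_le_subdegree by auto
  then show ?thesis
    unfolding fls_order_ge_def by (auto intro!: fls_times_nth_eq0)
qed auto

lemma fls_order_ge_mult_nth:
  fixes f g :: "'a::comm_ring_1 fls"
  assumes f: "fls_order_ge f n" and g: "fls_order_ge g m"
  shows "(f * g) $$ (n + m) = f $$ n * g $$ m"
proof (cases "f $$ n = 0 \<or> g $$ m = 0")
  case True
  then have "fls_order_ge (f * g) (n + m + 1)"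
    using fls_order_ge_mult[OF fls_order_ge_Suc[OF f] g] fls_order_ge_mult[OF f fls_order_ge_Suc[OF g]]
    by (auto simp: add_ac)
  with True show ?thesis
    by (auto simp: fls_order_ge_def)
next
  case False
  then show ?thesis
    using fls_times_base[of f g] fls_order_ge_subdegree_eq[OF f] fls_order_ge_subdegree_eq[OF g]
    by simp
qed

lemma fls_order_ge_power:
  fixes f :: "'a::comm_ring_1 fls"
  shows "fls_order_ge f n \<Longrightarrow> fls_order_ge (f ^ k) (int k * n)"
  by (induction k) (auto simp: algebra_simps dest: fls_order_ge_mult)

lemma fls_order_ge_power_nth:
  fixes f :: "'a::comm_ring_1 fls"
  assumes f: "fls_order_ge f n"
  shows "(f ^ k) $$ (int k * n) = (f $$ n) ^ k"
proof (induction k)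
  case (Suc k)
  have "(f * f ^ k) $$ (n + int k * n) = f $$ n * (f ^ k) $$ (int k * n)"
    using fls_order_ge_mult_nth[OF f fls_order_ge_power[OF f]] .
  with Suc show ?case
    by (simp add: algebra_simps)
qed simp

lemma fls_order_ge_inverse:
  fixes f :: "'a::division_ring fls"
  shows "fls_order_ge (inverse f) (- fls_subdegree f)"
  using fls_order_ge_subdegree[of "inverse f"] by simp

lemma fls_order_ge_inverse_unit:
  fixes f :: "'a::division_ring fls"
  shows "fls_order_ge f 0 \<Longrightarrow> f $$ 0 \<noteq> 0 \<Longrightarrow> fls_order_ge (inverse f) 0"
  using fls_order_ge_inverse[of f] fls_order_ge_subdegree_eq[of f 0] by simp

lemma fls_order_ge_deriv: "fls_order_ge f n \<Longrightarrow> fls_order_ge (fls_deriv f) (n - 1)"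
  by (auto simp: fls_order_ge_def)


section \<open>Expansion in \<open>E\<close>\<close>

definition fps_coeff_deriv_wrt :: "'a::field fls \<Rightarrow> 'a fls fps \<Rightarrow> 'a fls fps" where
  "fps_coeff_deriv_wrt Z f = Abs_fps (\<lambda>n. fls_deriv_wrt Z (f $ n))"

lemma fps_coeff_deriv_wrt_nth [simp]: "fps_coeff_deriv_wrt Z f $ n = fls_deriv_wrt Z (f $ n)"
  by (simp add: fps_coeff_deriv_wrt_def)

lemma fps_coeff_deriv_wrt_simps [simp]:
  "fps_coeff_deriv_wrt Z 0 = 0"
  "fps_coeff_deriv_wrt Z (f + g) = fps_coeff_deriv_wrt Z f + fps_coeff_deriv_wrt Z g"
  "fps_coeff_deriv_wrt Z (f * g) = fps_coeff_deriv_wrt Z f * g + f * fps_coeff_deriv_wrt Z g"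
  "fps_coeff_deriv_wrt Z (fps_const c) = fps_const (fls_deriv_wrt Z c)"
  "fps_coeff_deriv_wrt Z fps_X = 0"
  by (simp_all add: fps_eq_iff fps_mult_nth fls_deriv_wrt_sum sum.distrib)

lemma coeff_ring_hom_fps_const_fls_eval: "coeff_ring_hom (\<lambda>q. fps_const (fls_eval Z q))"
  by unfold_locales simp_all

definition E_expansion :: "complex fls \<Rightarrow> complex \<Rightarrow> bipoly \<Rightarrow> complex fls fps" where
  "E_expansion Z E0 A =
     poly (map_poly (\<lambda>q. fps_const (fls_eval Z q)) A) (fps_const (fls_const E0) + fps_X)"

lemma E_expansion_simps [simp]:
  "E_expansion Z E0 0 = 0" "E_expansion Z E0 1 = 1"
  "E_expansion Z E0 (pCons q A) =
     fps_const (fls_eval Z q) + (fps_const (fls_const E0) + fps_X) * E_expansion Z E0 A"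
  "E_expansion Z E0 (A + A') = E_expansion Z E0 A + E_expansion Z E0 A'"
  "E_expansion Z E0 (A - A') = E_expansion Z E0 A - E_expansion Z E0 A'"
  "E_expansion Z E0 (A * A') = E_expansion Z E0 A * E_expansion Z E0 A'"
  "E_expansion Z E0 (A ^ n) = E_expansion Z E0 A ^ n"
  using coeff_ring_hom_fps_const_fls_eval[of Z]
  by (simp_all add: E_expansion_def map_poly_pCons coeff_ring_hom.map_poly_add
      coeff_ring_hom.map_poly_diff coeff_ring_hom.map_poly_mult coeff_ring_hom.map_poly_power)

lemma E_expansion_generators [simp]:
  "E_expansion Z E0 Zvar = fps_const Z"
  "E_expansion Z E0 Evar = fps_const (fls_const E0) + fps_X"
  "E_expansion Z E0 (bconst c) = fps_const (fls_const c)"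
  "E_expansion Z E0 (Evar - bconst E0) = fps_X"
  by (simp_all add: Zvar_def Evar_def bconst_def)

lemma E_expansion_dz:
  assumes "fls_deriv Z \<noteq> 0"
  shows "E_expansion Z E0 (dz A) = fps_coeff_deriv_wrt Z (E_expansion Z E0 A)"
  by (induction A) (simp_all add: dz_def map_poly_pCons fls_eval_pderiv[OF assms])

definition taylor_coeff :: "complex \<Rightarrow> bipoly \<Rightarrow> nat \<Rightarrow> complex poly" where
  "taylor_coeff E0 A k = coeff (A \<circ>\<^sub>p [:[:E0:], 1:]) k"

lemma taylor_coeff_0: "taylor_coeff E0 A 0 = at_E A E0"
  by (simp add: taylor_coeff_def at_E_def)

definition E_derivative_numerator :: "complex \<Rightarrow> bipoly \<Rightarrow> bipoly \<Rightarrow> complex poly" where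
  "E_derivative_numerator E0 A B =
     taylor_coeff E0 A 1 * taylor_coeff E0 B 0 - taylor_coeff E0 A 0 * taylor_coeff E0 B 1"

lemma E_expansion_nth: "E_expansion Z E0 A $ k = fls_eval Z (taylor_coeff E0 A k)"
proof (induction A arbitrary: k)
  case (pCons q A)
  have "[:[:E0:], 1:] * P = smult [:E0:] P + pCons 0 P" for P :: bipoly
    by (simp add: algebra_simps)
  then have "taylor_coeff E0 (pCons q A) k = (if k = 0 then q else 0) + [:E0:] * taylor_coeff E0 A k
      + (if k = 0 then 0 else taylor_coeff E0 A (k - 1))"
    by (cases k) (simp_all add: taylor_coeff_def pcompose_pCons coeff_pCons)
  then show ?case
    using pCons.IH by (simp add: distrib_right)
qed (simp add: taylor_coeff_def)

lemma fps_mult_nth_2: "(f * g) $ 2 = f $ 0 * g $ 2 + f $ 1 * g $ 1 + f $ 2 * g $ 0"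
  by (simp add: fps_mult_nth numeral_2_eq_2)

lemma Hnum_quotient_identity:
  fixes M B dM dB z iz T c :: "'a::comm_ring_1"
  assumes "z * iz = 1"
  shows "(M * B)^2 * z^2 + (M * B) * B * z - ((dM * B + M * dB) * B - (M * B) * dB) * z^2
      + (- (z^4) + z^2 * T - c + 1) * B^2
    = B^2 * z^2 * (M^2 - dM + M * iz - z^2 + T - (c - 1) * iz^2)"
proof -
  have "B^2 * z^2 * (M^2 - dM + M * iz - z^2 + T - (c - 1) * iz^2)
      = B^2 * (z^2 * (M^2 - dM) + (z * iz) * z * M - z^4 + z^2 * T - (c - 1) * (z * iz)^2)"
    by (simp add: algebra_simps power2_eq_square power4_eq_xxxx)
  also have "\<dots> = B^2 * (z^2 * (M^2 - dM) + z * M - z^4 + z^2 * T - c + 1)"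
    by (simp only: assms mult_1_left power_one mult_1_right) (simp add: algebra_simps)
  also have "\<dots> = (M * B)^2 * z^2 + (M * B) * B * z - ((dM * B + M * dB) * B - (M * B) * dB) * z^2
      + (- (z^4) + z^2 * T - c + 1) * B^2"
    by (simp add: algebra_simps power2_eq_square power4_eq_xxxx)
  finally show ?thesis ..
qed

lemma E_coefficient_equations:
  fixes Z :: "complex fls"
  assumes dZ: "fls_deriv Z \<noteq> 0"
    and inj: "\<And>p. p \<noteq> 0 \<Longrightarrow> fls_eval Z p \<noteq> 0"
    and B: "regular_at_E B E0" and D: "regular_at_E D E0"
    and eq: "Hnum \<nu> A B * D = (Evar - bconst E0)^3 * C * B^2"
  obtains m0 m1 m2 where
    "m0^2 = fls_deriv_wrt Z m0 + (- inverse Z) * m0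
        + (Z^2 - fls_const E0 + fls_const (4 * \<nu>^2 - 1) * inverse Z ^ 2)"
    "fls_deriv_wrt Z m1 = (2 * m0 + inverse Z) * m1 + 1"
    "fls_deriv_wrt Z m2 = (2 * m0 + inverse Z) * m2 + m1^2"
    "m1 = fls_eval Z (E_derivative_numerator E0 A B) / fls_eval Z (at_E B E0 ^ 2)"
proof -
  let ?X = "E_expansion Z E0" and ?D = "fls_deriv_wrt Z"
  define a b where "a = ?X A" and "b = ?X B"
  have b0: "b $ 0 \<noteq> 0" and d0: "?X D $ 0 \<noteq> 0"
    using B D inj by (simp_all add: b_def E_expansion_nth taylor_coeff_0 regular_at_E_def)
  define M where "M = a * inverse b"
  have a: "a = M * b"
    using inverse_mult_eq_1[OF b0] by (simp add: M_def mult.assoc)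
  define z iz where "z = fps_const Z" and "iz = fps_const (inverse Z)"
  have z_iz: "z * iz = 1"
    using dZ by (cases "Z = 0") (auto simp: z_def iz_def)
  \<comment> \<open>\<open>H\<close> is the expansion of \<open>Hnum / (B\<^sup>2 z\<^sup>2)\<close>; the hypothesis makes it divisible by \<open>\<epsilon>\<^sup>3\<close>.\<close>
  define H where "H = M^2 - fps_coeff_deriv_wrt Z M + M * iz - z^2
    + (fps_const (fls_const E0) + fps_X) - fps_const (fls_const (4 * \<nu>^2 - 1)) * iz^2"
  let ?c = "fps_const (fls_const (4 * \<nu>^2))"
  have "?X (Hnum \<nu> A B) = (M * b)^2 * z^2 + (M * b) * b * z
      - ((fps_coeff_deriv_wrt Z M * b + M * fps_coeff_deriv_wrt Z b) * b
         - (M * b) * fps_coeff_deriv_wrt Z b) * z^2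
      + (- (z^4) + z^2 * (fps_const (fls_const E0) + fps_X) - ?c + 1) * b^2"
    by (simp add: Hnum_def E_expansion_dz[OF dZ] a_def[symmetric] b_def[symmetric] a z_def
        del: fps_const_power)
  also have "\<dots> = b^2 * z^2 * H"
    unfolding H_def fls_const_diff fls_const_1 fps_const_sub[symmetric] fps_const_1_eq_1
    by (rule Hnum_quotient_identity[OF z_iz])
  finally have "?X (Hnum \<nu> A B) = b^2 * z^2 * H" .
  then have cancel: "b^2 * (z^2 * H * ?X D) = b^2 * (fps_X^3 * ?X C)"
    using arg_cong[OF eq, of ?X] by (simp add: b_def algebra_simps)
  define W where "W = z^2 * ?X D"
  have HD: "W * H = fps_X^3 * ?X C"
    using cancel b0 by (auto simp: W_def mult_ac)
  have "W $ 0 \<noteq> 0"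
    using d0 dZ by (auto simp: W_def z_def)
  then have "H = inverse W * (W * H)"
    by (simp add: mult.assoc[symmetric] inverse_mult_eq_1)
  then have "H = fps_X^3 * (?X C * inverse W)"
    unfolding HD by (simp add: mult_ac)
  then have H: "H $ k = 0" if "k < 3" for k
    using that by (simp add: fps_X_power_mult_nth)
  define m0 m1 m2 where "m0 = M $ 0" and "m1 = M $ 1" and "m2 = M $ 2"
  show thesis
  proof
    have "m0^2 - (?D m0 + (- inverse Z) * m0
        + (Z^2 - fls_const E0 + fls_const (4 * \<nu>^2 - 1) * inverse Z ^ 2)) = H $ 0"
      by (simp add: H_def m0_def z_def iz_def power2_eq_square algebra_simps)
    with H[of 0] show "m0^2 = ?D m0 + (- inverse Z) * m0
        + (Z^2 - fls_const E0 + fls_const (4 * \<nu>^2 - 1) * inverse Z ^ 2)"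
      by simp
    have "(2 * m0 + inverse Z) * m1 + 1 - ?D m1 = H $ 1"
      by (simp add: H_def m0_def m1_def z_def iz_def power2_eq_square fps_mult_nth_1 algebra_simps)
    with H[of 1] show "?D m1 = (2 * m0 + inverse Z) * m1 + 1"
      by simp
    have "(2 * m0 + inverse Z) * m2 + m1^2 - ?D m2 = H $ 2"
      by (simp add: H_def m0_def m1_def m2_def z_def iz_def power2_eq_square fps_mult_nth_2
          algebra_simps)
    with H[of 2] show "?D m2 = (2 * m0 + inverse Z) * m2 + m1^2"
      by simp
    have "a $ 0 = m0 * b $ 0" "a $ 1 = m0 * b $ 1 + m1 * b $ 0"
      by (simp_all add: a m0_def m1_def fps_mult_nth_1)
    then have "m1 = (a $ 1 * b $ 0 - a $ 0 * b $ 1) / (b $ 0)^2"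
      using b0 by (simp add: field_simps power2_eq_square)
    then show "m1 = fls_eval Z (E_derivative_numerator E0 A B) / fls_eval Z (at_E B E0 ^ 2)"
      by (simp add: a_def b_def E_expansion_nth E_derivative_numerator_def taylor_coeff_0)
  qed
qed

section \<open>Local analysis of the coefficient equations\<close>

text \<open>If \<open>m\<close> had a pole of order at least two, \<open>m\<^sup>2\<close> would be the only term of lowest order.\<close>

lemma fls_order_ge_riccati:
  fixes m Dm U V :: "'a::field fls"
  assumes eq: "m^2 = Dm + U * m + V"
    and Dm: "fls_order_ge Dm (fls_subdegree m - 1)"
    and U: "fls_order_ge U (-1)" and V: "fls_order_ge V (-2)"
  shows "fls_order_ge m (-1)"
proof (rule ccontr)
  assume "\<not> fls_order_ge m (-1)"
  then obtain k where k: "k < -1" "m $$ k \<noteq> 0"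
    by (auto simp: fls_order_ge_def)
  define d where "d = fls_subdegree m"
  have d: "d \<le> -2"
    using fls_subdegree_leI[OF k(2)] k(1) by (simp add: d_def)
  have m: "fls_order_ge m d"
    by (simp add: d_def fls_order_ge_subdegree)
  have "fls_order_ge (U * m) (d - 1)"
    using fls_order_ge_mult[OF U m] by simp
  moreover have "fls_order_ge V (d - 1)"
    using fls_order_ge_mono[OF V] d by simp
  ultimately have "fls_order_ge (m^2) (d - 1)"
    unfolding eq using Dm by (simp add: d_def fls_order_ge_add)
  then have "(m^2) $$ (int 2 * d) = 0"
    by (rule fls_order_geD) (use d in simp)
  moreover have "m $$ d \<noteq> 0"
    using fls_nonzeroI[OF k(2)] by (simp add: d_def)
  ultimately show False
    using fls_order_ge_power_nth[OF m, of 2] by simp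
qed

text \<open>The indicial equation of \<open>f' = P f\<close> at a regular singular point.\<close>

lemma fls_residue_eq_subdegree_of_linear_ode:
  fixes P f g :: "'a::field_char_0 fls"
  assumes ode: "fls_deriv f = P * f + g" and P: "fls_order_ge P (-1)"
    and f: "f \<noteq> 0" and g: "g $$ (fls_subdegree f - 1) = 0"
  shows "fls_residue P = of_int (fls_subdegree f)"
proof -
  define e where "e = fls_subdegree f"
  have "(P * f) $$ (-1 + e) = P $$ (-1) * f $$ e"
    using fls_order_ge_mult_nth[OF P fls_order_ge_subdegree] by (simp add: e_def)
  then have "of_int e * f $$ e = P $$ (-1) * f $$ e"
    using arg_cong[OF ode, of "\<lambda>h. h $$ (e - 1)"] g by (simp add: e_def add.commute)
  moreover have "f $$ e \<noteq> 0"
    using f by (simp add: e_def)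
  ultimately show ?thesis
    by (simp add: e_def)
qed

lemma fls_residue_eq_0_of_linear_system:
  fixes P m1 m2 :: "'a::field_char_0 fls"
  assumes P: "fls_order_ge P (-1)"
    and ode1: "fls_deriv m1 = P * m1 + 1"
    and ode2: "fls_deriv m2 = P * m2 + m1^2"
  shows "fls_residue m1 = 0"
proof (rule ccontr)
  assume res: "fls_residue m1 \<noteq> 0"
  then have m1: "m1 \<noteq> 0"
    by auto
  define e where "e = fls_subdegree m1"
  have e: "e \<le> -1"
    using res fls_subdegree_leI by (auto simp: e_def)
  have Pe: "fls_residue P = of_int e"
    using fls_residue_eq_subdegree_of_linear_ode[OF ode1 P m1] e by (simp add: e_def)
  have m1sq: "fls_order_ge (m1^2) (2 * e)"
    using fls_order_ge_power[OF fls_order_ge_subdegree[of m1], of 2] by (simp add: e_def)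
  have m2: "fls_order_ge m2 (2 * e + 1)"
  proof (cases "m2 = 0 \<or> 2 * e < fls_subdegree m2")
    case True
    then show ?thesis
      using fls_order_ge_mono[OF fls_order_ge_subdegree[of m2], of "2 * e + 1"] by auto
  next
    case False
    then have "fls_residue P = of_int (fls_subdegree m2)"
      by (intro fls_residue_eq_subdegree_of_linear_ode[OF ode2 P])
        (auto intro: fls_order_geD[OF m1sq])
    with Pe False e show ?thesis
      by simp
  qed
  define q where "q = m2 * inverse (m1^2)"
  have "fls_order_ge (inverse (m1^2)) (- (2 * e))"
    using fls_order_ge_inverse[of "m1^2"] m1 by (simp add: fls_subdegree_pow e_def)
  then have "fls_order_ge q 1"
    using fls_order_ge_mult[OF m2] by (fastforce simp: q_def)
  then have "fls_residue q = 0"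
    by (simp add: fls_order_geD)
  have "fls_deriv (m2 * inverse m1)
      = m2 * (- (P * m1 + 1) * (inverse m1)^2) + (P * m2 + m1^2) * inverse m1"
    by (simp add: fls_inverse_deriv ode1 ode2)
  also have "\<dots> = m1 - q"
    using m1 by (simp add: q_def field_simps power2_eq_square)
  finally have "fls_residue (m1 - q) = 0"
    by (metis fls_residue_deriv)
  with \<open>fls_residue q = 0\<close> res show False
    by simp
qed

lemma fls_residue_eq_0_at_finite_point:
  fixes m0 m1 m2 :: "'a::field_char_0 fls" and a :: 'a
  defines "Z \<equiv> z_at a"
  assumes eq0: "m0^2 = fls_deriv m0 + (- inverse Z) * m0
      + (Z^2 - fls_const E + fls_const c * inverse Z ^ 2)"
    and eq1: "fls_deriv m1 = (2 * m0 + inverse Z) * m1 + 1"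
    and eq2: "fls_deriv m2 = (2 * m0 + inverse Z) * m2 + m1^2"
  shows "fls_residue m1 = 0"
proof -
  have Z: "fls_order_ge Z 0"
    by (simp add: Z_def z_at_def fls_order_ge_add)
  have "fls_subdegree Z \<le> 1"
    by (rule fls_subdegree_leI) (simp add: Z_def z_at_def)
  then have iZ: "fls_order_ge (inverse Z) (-1)"
    using fls_order_ge_mono[OF fls_order_ge_inverse[of Z], of "-1"] by simp
  have m0: "fls_order_ge m0 (-1)"
  proof (rule fls_order_ge_riccati[OF eq0])
    show "fls_order_ge (fls_deriv m0) (fls_subdegree m0 - 1)"
      by (intro fls_order_ge_deriv fls_order_ge_subdegree)
    show "fls_order_ge (- inverse Z) (-1)"
      by (rule fls_order_ge_uminus[OF iZ])
    have "fls_order_ge (fls_const c * inverse Z ^ 2) (0 + int 2 * (-1))"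
      by (intro fls_order_ge_mult fls_order_ge_power iZ) simp
    moreover have "fls_order_ge (Z^2) (-2)"
      using fls_order_ge_mono[OF fls_order_ge_power[OF Z, of 2], of "-2"] by simp
    ultimately show "fls_order_ge (Z^2 - fls_const E + fls_const c * inverse Z ^ 2) (-2)"
      by (simp add: fls_order_ge_add fls_order_ge_diff)
  qed
  have "fls_order_ge (2 * m0 + inverse Z) (-1)"
    unfolding mult_2 by (intro fls_order_ge_add m0 iZ)
  then show ?thesis
    by (rule fls_residue_eq_0_of_linear_system[OF _ eq1 eq2])
qed

lemma fls_nth_1_ne_0_at_infinity:
  fixes m0 m1 :: "'a::field_char_0 fls"
  assumes eq0: "m0^2 = - (fls_X^2 * fls_deriv m0) + (- fls_X) * m0
      + (fls_X_inv^2 - fls_const E + fls_const c * fls_X ^ 2)"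
    and eq1: "- (fls_X^2 * fls_deriv m1) = (2 * m0 + fls_X) * m1 + 1"
  shows "m1 $$ 1 \<noteq> 0"
proof -
  have X2: "fls_order_ge (fls_X^2 :: 'a fls) 2"
    using fls_order_ge_power[of "fls_X :: 'a fls" 1 2] by simp
  have D: "fls_order_ge (- (fls_X^2 * fls_deriv f)) (n + 1)" if "fls_order_ge f n" for f :: "'a fls" and n
    using fls_order_ge_uminus[OF fls_order_ge_mult[OF X2 fls_order_ge_deriv[OF that]]]
    by (simp add: add.commute)
  have X_inv2: "fls_order_ge (fls_X_inv^2 :: 'a fls) (-2)"
    using fls_order_ge_power[of "fls_X_inv :: 'a fls" "-1" 2] by simp
  have m0: "fls_order_ge m0 (-1)"
  proof (rule fls_order_ge_riccati[OF eq0])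
    show "fls_order_ge (- (fls_X^2 * fls_deriv m0)) (fls_subdegree m0 - 1)"
      using D[OF fls_order_ge_subdegree] by (rule fls_order_ge_mono) simp
    show "fls_order_ge (- fls_X :: 'a fls) (-1)"
      by (simp add: fls_order_ge_uminus)
    show "fls_order_ge (fls_X_inv^2 - fls_const E + fls_const c * fls_X ^ 2) (-2)"
      using fls_order_ge_mono[OF fls_order_ge_mult[OF _ X2, of "fls_const c" 0], of "-2"] X_inv2
      by (simp add: fls_order_ge_add fls_order_ge_diff)
  qed
  define L where "L = - (fls_X^2 * fls_deriv m0) + (- fls_X) * m0"
  define V where "V = fls_X_inv^2 - fls_const E + fls_const c * fls_X ^ 2"
  have "fls_order_ge (- (fls_X^2 * fls_deriv m0)) 0"
    using D[OF m0] by simp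
  moreover have "fls_order_ge ((- fls_X) * m0) 0"
    using fls_order_ge_mult[OF _ m0, of "- fls_X" 1] by (simp add: fls_order_ge_uminus)
  ultimately have "fls_order_ge L 0"
    unfolding L_def by (rule fls_order_ge_add)
  then have "L $$ (-2) = 0"
    by (rule fls_order_geD) simp
  moreover have "V $$ (-2) = 1"
  proof -
    have "(fls_const c * fls_X ^ 2) $$ (-2) = 0"
      using fls_order_geD[OF fls_order_ge_mult[OF _ X2, of "fls_const c" 0]] by simp
    then show ?thesis
      by (simp add: V_def fls_X_inv_power_conv_shift_1)
  qed
  moreover have "m0^2 = L + V"
    using eq0 unfolding L_def V_def .
  ultimately have "(m0^2) $$ (-2) = 1"
    by simp
  then have m0_res: "(m0 $$ (-1))^2 = 1"
    using fls_order_ge_power_nth[OF m0, of 2] by simp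
  define P where "P = 2 * m0 + fls_X"
  have P: "fls_order_ge P (-1)"
    unfolding P_def mult_2 by (intro fls_order_ge_add m0) simp
  have P_res: "P $$ (-1) \<noteq> 0"
    using m0_res by (auto simp: P_def)
  have "m1 \<noteq> 0"
    using eq1 by auto
  define e where "e = fls_subdegree m1"
  have "(- (fls_X^2 * fls_deriv m1)) $$ (e - 1) = 0"
    using D[OF fls_order_ge_subdegree[of m1]] by (rule fls_order_geD) (simp add: e_def)
  moreover have "(P * m1) $$ (-1 + e) = P $$ (-1) * m1 $$ e"
    using fls_order_ge_mult_nth[OF P fls_order_ge_subdegree] by (simp add: e_def)
  ultimately have "P $$ (-1) * m1 $$ e + (if e = 1 then 1 else 0) = 0"
    using arg_cong[OF eq1, of "\<lambda>h. h $$ (e - 1)"] by (simp add: P_def add.commute)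
  moreover have "m1 $$ e \<noteq> 0"
    using \<open>m1 \<noteq> 0\<close> by (simp add: e_def)
  ultimately show ?thesis
    using P_res by (auto split: if_splits)
qed

section \<open>Residues of rational functions\<close>

lemma fls_eval_z_at:
  fixes p :: "'a::comm_ring_1 poly"
  shows "fls_order_ge (fls_eval (z_at a) p) 0" and "fls_eval (z_at a) p $$ 0 = poly p a"
proof -
  have Z: "fls_order_ge (z_at a) 0" and "z_at a $$ 0 = a"
    by (simp_all add: z_at_def fls_order_ge_add)
  have "fls_order_ge (fls_eval (z_at a) p) 0 \<and> fls_eval (z_at a) p $$ 0 = poly p a"
  proof (induction p)
    case (pCons c p)
    then show ?case
      using fls_order_ge_mult[OF Z, of _ 0] fls_order_ge_mult_nth[OF Z, of _ 0] \<open>z_at a $$ 0 = a\<close>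
      by (simp add: fls_order_ge_add)
  qed simp
  then show "fls_order_ge (fls_eval (z_at a) p) 0" and "fls_eval (z_at a) p $$ 0 = poly p a"
    by auto
qed

lemma fls_eval_z_at_nonzero:
  fixes p :: "'a::field poly"
  assumes "p \<noteq> 0"
  shows "fls_eval (z_at a) p \<noteq> 0"
proof -
  obtain q where q: "p = [:-a, 1:] ^ order a p * q" and "\<not> [:-a, 1:] dvd q"
    using order_decomp[OF assms] by blast
  then have "fls_eval (z_at a) q $$ 0 \<noteq> 0"
    by (simp add: fls_eval_z_at poly_eq_0_iff_dvd)
  then have "fls_eval (z_at a) q \<noteq> 0"
    by (rule fls_nonzeroI)
  moreover have "fls_eval (z_at a) [:-a, 1:] \<noteq> 0"
    by (simp add: z_at_def)
  ultimately show ?thesis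
    by (subst q) simp
qed

lemma fls_residue_z_at_regular:
  fixes p q :: "'a::field poly"
  assumes "poly q a \<noteq> 0"
  shows "fls_residue (fls_eval (z_at a) p / fls_eval (z_at a) q) = 0"
proof -
  have "fls_order_ge (inverse (fls_eval (z_at a) q)) 0"
    using assms by (intro fls_order_ge_inverse_unit) (simp_all add: fls_eval_z_at)
  then have "fls_order_ge (fls_eval (z_at a) p * inverse (fls_eval (z_at a) q)) (0 + 0)"
    by (intro fls_order_ge_mult fls_eval_z_at)
  then show ?thesis
    by (simp add: divide_inverse fls_order_geD)
qed

lemma fls_residue_z_at_principal_part:
  fixes a b c :: "'a::field"
  shows "fls_residue (fls_const c / (z_at b - fls_const a) ^ k)
    = (if b = a \<and> k = 1 then c else 0)"
proof (cases "b = a")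
  case True
  then show ?thesis
    by (simp add: z_at_def divide_inverse fls_inverse_X_power fls_X_inv_power_conv_shift_1)
next
  case False
  then have "poly ([:-a, 1:] ^ k) b \<noteq> 0"
    by simp
  then show ?thesis
    using fls_residue_z_at_regular[of "[:-a, 1:] ^ k" b "[:c:]"] False by simp
qed

lemma fls_eval_X_inv:
  fixes p :: "'a::comm_ring_1 poly"
  shows "fls_order_ge (fls_eval fls_X_inv p) (- int (degree p))"
    and "fls_eval fls_X_inv p $$ (- int (degree p)) = lead_coeff p"
    and "k > 0 \<Longrightarrow> fls_eval fls_X_inv p $$ k = 0"
proof -
  have "fls_order_ge (fls_eval fls_X_inv p) (- int (degree p))
      \<and> fls_eval fls_X_inv p $$ (- int (degree p)) = lead_coeff p
      \<and> (\<forall>k>0. fls_eval fls_X_inv p $$ k = 0)"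
  proof (induction p)
    case (pCons c p)
    then show ?case
      by (cases "p = 0") (auto simp: fls_X_inv_times_conv_shift fls_order_ge_def algebra_simps)
  qed simp
  then show "fls_order_ge (fls_eval fls_X_inv p) (- int (degree p))"
    and "fls_eval fls_X_inv p $$ (- int (degree p)) = lead_coeff p"
    and "k > 0 \<Longrightarrow> fls_eval fls_X_inv p $$ k = 0"
    by auto
qed

lemma fls_subdegree_fls_eval_X_inv:
  "p \<noteq> 0 \<Longrightarrow> fls_subdegree (fls_eval fls_X_inv p) = - int (degree p)"
  by (simp add: fls_order_ge_subdegree_eq fls_eval_X_inv)

lemma fls_eval_X_inv_nonzero: "p \<noteq> 0 \<Longrightarrow> fls_eval fls_X_inv p \<noteq> 0"
  by (metis fls_eval_X_inv(2) fls_nonzeroI leading_coeff_0_iff)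

lemma fls_nth_1_quotient_X_inv_degree:
  fixes p q :: "'a::field poly"
  assumes "degree p + 2 \<le> degree q"
  shows "(fls_eval fls_X_inv p / fls_eval fls_X_inv q) $$ 1 = 0"
proof -
  have "q \<noteq> 0"
    using assms by auto
  then have "fls_order_ge (inverse (fls_eval fls_X_inv q)) (int (degree q))"
    using fls_order_ge_inverse[of "fls_eval fls_X_inv q"] by (simp add: fls_subdegree_fls_eval_X_inv)
  then have "fls_order_ge (fls_eval fls_X_inv p / fls_eval fls_X_inv q)
      (- int (degree p) + int (degree q))"
    unfolding divide_inverse by (intro fls_order_ge_mult fls_eval_X_inv)
  then show ?thesis
    by (rule fls_order_geD) (use assms in simp)
qed

lemma fls_nth_1_quotient_X_inv_const:
  fixes p :: "'a::field poly"
  shows "(fls_eval fls_X_inv p / fls_eval fls_X_inv [:c:]) $$ 1 = 0"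
  by (simp add: divide_inverse fls_inverse_const fls_eval_X_inv)

lemma partial_fraction_split:
  fixes x r C p1 :: "'a::field"
  assumes "x \<noteq> 0" "r \<noteq> 0" "k \<ge> 1"
  shows "(C * r + x * p1) / (x^k * r) = C / x^k + p1 / (x^(k-1) * r)"
proof -
  obtain j where "k = Suc j"
    using assms(3) by (cases k) auto
  then show ?thesis
    using assms(1,2) by (simp add: field_simps)
qed

text \<open>The coefficient of \<open>X\<close> in the expansion at infinity is minus the residue there, so this is
  the residue theorem for rational functions, proved by splitting off principal parts.\<close>

theorem fls_nth_1_at_infinity_eq_0_if_residues_eq_0:
  fixes P Q :: "complex poly"
  assumes "Q \<noteq> 0" and "\<And>a. fls_residue (fls_eval (z_at a) P / fls_eval (z_at a) Q) = 0"
  shows "(fls_eval fls_X_inv P / fls_eval fls_X_inv Q) $$ 1 = 0"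
  using assms
proof (induction "degree Q" arbitrary: P Q rule: less_induct)
  case less
  show ?case
  proof (cases "degree Q = 0")
    case True
    then show ?thesis
      using fls_nth_1_quotient_X_inv_const by (metis degree_0_id)
  next
    case False
    then have "\<not> constant (poly Q)"
      by (simp add: constant_degree)
    then obtain a where "poly Q a = 0"
      using fundamental_theorem_of_algebra by blast
    define L where "L = [:-a, 1:]"
    define k where "k = order a Q"
    have k: "k \<ge> 1"
      using \<open>poly Q a = 0\<close> less.prems(1) order_root[of Q a] by (simp add: k_def)
    obtain R where QR: "Q = L^k * R" and "\<not> L dvd R"
      using order_decomp[OF less.prems(1), of a] by (auto simp: L_def k_def)
    then have R: "poly R a \<noteq> 0"
      by (simp add: L_def poly_eq_0_iff_dvd)
    define c where "c = poly P a / poly R a"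
    have "poly (P - smult c R) a = 0"
      using R by (simp add: c_def)
    then obtain P1 where P1: "P = smult c R + L * P1"
      unfolding L_def poly_eq_0_iff_dvd by (metis dvdE diff_eq_eq add.commute)
    define Q1 where "Q1 = L^(k-1) * R"
    have "R \<noteq> 0" "L \<noteq> 0"
      using R by (auto simp: L_def)
    then have "Q1 \<noteq> 0" and "degree Q1 < degree Q"
      using k by (simp_all add: QR Q1_def degree_mult_eq L_def degree_linear_power)
    have split: "fls_eval Z P / fls_eval Z Q = fls_const c / fls_eval Z L ^ k
        + fls_eval Z P1 / fls_eval Z Q1"
      if "fls_eval Z L \<noteq> 0" "fls_eval Z R \<noteq> 0" for Z
      using partial_fraction_split[OF that k] by (simp add: P1 QR Q1_def)
    have split_at: "fls_eval (z_at b) P / fls_eval (z_at b) Q = fls_const c / fls_eval (z_at b) L ^ k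
        + fls_eval (z_at b) P1 / fls_eval (z_at b) Q1" for b
      using \<open>L \<noteq> 0\<close> \<open>R \<noteq> 0\<close> by (intro split fls_eval_z_at_nonzero)
    have c: "c = 0 \<or> k \<ge> 2"
    proof (cases "k = 1")
      case True
      have "fls_residue (fls_eval (z_at a) P1 / fls_eval (z_at a) Q1) = 0"
        using True fls_residue_z_at_regular[OF R, of P1] by (simp add: Q1_def)
      then show ?thesis
        using less.prems(2)[of a] split_at[of a] True fls_residue_z_at_principal_part[of c a a 1]
        by (simp add: L_def)
    qed (use k in auto)
    have "fls_residue (fls_eval (z_at b) P1 / fls_eval (z_at b) Q1) = 0" for b
      using less.prems(2)[of b] split_at[of b] c fls_residue_z_at_principal_part[of c b a k]
      by (auto simp: L_def)
    then have "(fls_eval fls_X_inv P1 / fls_eval fls_X_inv Q1) $$ 1 = 0"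
      using less.hyps \<open>degree Q1 < degree Q\<close> \<open>Q1 \<noteq> 0\<close> by blast
    moreover have "(fls_const c / fls_eval fls_X_inv L ^ k) $$ 1 = 0"
      using c fls_nth_1_quotient_X_inv_degree[of "[:c:]" "L ^ k"]
      by (auto simp: L_def degree_linear_power)
    ultimately show ?thesis
      using split[of fls_X_inv] \<open>L \<noteq> 0\<close> \<open>R \<noteq> 0\<close> by (simp add: fls_eval_X_inv_nonzero)
  qed
qed

lemma fls_residue_E_derivative_eq_0:
  assumes B: "regular_at_E B E0" and D: "regular_at_E D E0"
    and eq: "Hnum \<nu> A B * D = (Evar - bconst E0)^3 * C * B^2"
  shows "fls_residue (fls_eval (z_at a) (E_derivative_numerator E0 A B)
    / fls_eval (z_at a) (at_E B E0 ^ 2)) = 0"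
proof -
  have "fls_deriv (z_at a) \<noteq> 0" and "\<And>p. p \<noteq> 0 \<Longrightarrow> fls_eval (z_at a) p \<noteq> 0"
    by (simp add: z_at_def) (erule fls_eval_z_at_nonzero)
  \<comment> \<open>The leading \<open>assumption\<close> closes the trivial \<open>p \<noteq> 0 \<Longrightarrow> p \<noteq> 0\<close> left by the lifted premise.\<close>
  then show ?thesis
    by (rule E_coefficient_equations[OF _ _ B D eq])
      (assumption, unfold fls_deriv_wrt_z_at, hypsubst, rule fls_residue_eq_0_at_finite_point,
        assumption+)
qed

lemma fls_nth_1_E_derivative_at_infinity_ne_0:
  assumes B: "regular_at_E B E0" and D: "regular_at_E D E0"
    and eq: "Hnum \<nu> A B * D = (Evar - bconst E0)^3 * C * B^2"
  shows "(fls_eval fls_X_inv (E_derivative_numerator E0 A B)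
    / fls_eval fls_X_inv (at_E B E0 ^ 2)) $$ 1 \<noteq> 0"
proof -
  have "fls_deriv (fls_X_inv :: complex fls) \<noteq> 0"
    and "\<And>p. p \<noteq> 0 \<Longrightarrow> fls_eval fls_X_inv p \<noteq> 0"
    by (simp_all add: fls_eval_X_inv_nonzero)
  then show ?thesis
    by (rule E_coefficient_equations[OF _ _ B D eq])
      (assumption, unfold fls_deriv_wrt_X_inv fls_inverse_X_inv, hypsubst,
        rule fls_nth_1_ne_0_at_infinity, assumption+)
qed

theorem mainTheorem12:
  fixes \<nu> :: complex
  shows "\<not> (\<exists>(E0::complex) (A::bipoly) (B::bipoly).
             regular_at_E B E0 \<and> H_bigO3 \<nu> A B E0)"
proof
  assume "\<exists>E0 A B. regular_at_E B E0 \<and> H_bigO3 \<nu> A B E0"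
  then obtain E0 A B C D where B: "regular_at_E B E0" and D: "regular_at_E D E0"
    and eq: "Hnum \<nu> A B * D = (Evar - bconst E0)^3 * C * B^2"
    unfolding H_bigO3_def by blast
  have "at_E B E0 ^ 2 \<noteq> 0"
    using B by (simp add: regular_at_E_def)
  then have "(fls_eval fls_X_inv (E_derivative_numerator E0 A B)
      / fls_eval fls_X_inv (at_E B E0 ^ 2)) $$ 1 = 0"
    using fls_residue_E_derivative_eq_0[OF B D eq]
    by (rule fls_nth_1_at_infinity_eq_0_if_residues_eq_0)
  with fls_nth_1_E_derivative_at_infinity_ne_0[OF B D eq] show False
    by contradiction
qed

end
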